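(* Let $\mathbb{K}$ be a field of characteristic $2$, let $(A,L,\theta)$ be a restricted Lie–Rinehart algebra, let $(M,\rho)$ be a restricted Lie–Rinehart module and let $(\varphi,\omega)\in C^n_{\rm LR}(L;M)$. Then $\mathrm{d}^n_{\rm LR}(\varphi,\omega)\in C^{n+1}_{\rm LR}(L;M)$. Furthermore, $\mathrm{d}^{n+1}_{\rm LR}\circ\mathrm{d}^n_{\rm LR}=0$.
   Context: $\mathbb{K}$ has characteristic $2$. Restricted Lie algebra: Lie algebra with $x\mapsto x^{[2]}$, $(\lambda x)^{[2]}=\lambda^2x^{[2]}$, $\mathrm{ad}_{x^{[2]}}=\mathrm{ad}_x^2$, $(x+y)^{[2]}=x^{[2]}+y^{[2]}+[x,y]$. Restricted Lie–Rinehart algebra $(A,L,\theta)$: $A$ commutative associative, $L$ restricted Lie algebra and $A$-module, $\theta:L\to\mathrm{Der}(A)$ an $A$-linear restricted Lie morphism ($\mathrm{Der}(A)$ with commutator, $D^{[2]}=D^2$) with $[x,ay]=a[x,y]+\theta(x)(a)y$, $(ax)^{[2]}=a^2x^{[2]}+\theta(ax)(a)x$. Restricted Lie–Rinehart module: $A$-module $M$ with restricted Lie morphism $\rho:L\to\mathrm{End}(M)$ (so $\rho(x^{[2]})=\rho(x)^2$) and $\rho(x)(am)=a\rho(x)(m)+\theta(x)(a)m$. Write $x\cdot m=\rho(x)(m)$. $C^0_{\rm LR}(L;M)=M$, $C^1_{\rm LR}(L;M)=\mathrm{Hom}_A(L,M)$; for $n\ge2$, $C^n_{\rm LR}(L;M)$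 consists of pairs $(\varphi,\omega)$ with $\varphi:L^n\to M$ alternating and $A$-multilinear, $\omega:L\times L^{n-2}\to M$ alternating and $\mathbb{K}$-multilinear in the last $n-2$ arguments, such that for $z=(z_2,..,z_{n-1})$: $\omega(\lambda x,z)=\lambda^2\omega(x,z)$ ($\lambda\in\mathbb{K}$), $\omega(x+y,z)=\omega(x,z)+\omega(y,z)+\varphi(x,y,z)$, $\omega(ax,z)=a^2\omega(x,z)$ and $\omega(x,z_2,..,az_i,..)=a\,\omega(x,z_2,..,z_i,..)$ ($a\in A$). Differentials: $\mathrm{d}^0(m)(x)=x\cdot m$; $\mathrm{d}^1\psi=(\mathrm{d}_{\rm CE}\psi,\delta^1\psi)$, $\delta^1\psi(x)=\psi(x^{[2]})+x\cdot\psi(x)$; for $n\ge2$ $\mathrm{d}^n(\varphi,\omega)=(\mathrm{d}_{\rm CE}\varphi,\delta^n\omega)$ with $\mathrm{d}_{\rm CE}\varphi(x_1,..,x_{n+1})=\sum_{i<j}\varphi([x_i,x_j],x_1,..,\hat x_i,..,\hat x_j,..)+\sum_ix_i\cdot\varphi(x_1,..,\hat x_i,..)$ and $\delta^n\omega(x,z_2,..,z_n)=x\cdot\varphi(x,z_2,..,z_n)+\sum_{i=2}^nz_i\cdot\omega(x,..,\hat z_i,..)+\varphi(x^{[2]},z_2,..,z_n)+\sum_{i=2}^n\varphi([x,z_i],x,z_2,..,\hat z_i,..,z_n)+\sum_{2\le i<j\le n}\omega(x,[z_i,z_j],z_2,..,\hat z_i,..,\hat z_j,..,z_n)$. *)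

theory Defs
  imports Main
begin

text \<open>The commutative
associative unital K-algebra A is a type 'a of class comm_ring_1 together with a
ring homomorphism iota from 'k to 'a (the K-vector space structure of A is
c.a = iota c * a). L and M are abelian groups with A-module structures smL, smM;
their K-vector space structures are induced by iota. Elements of L^n are lists
of length n.\<close>

definition ring_hom_K :: "('k::field \<Rightarrow> 'a::comm_ring_1) \<Rightarrow> bool" where
  "ring_hom_K \<iota> \<longleftrightarrow> \<iota> 1 = 1 \<and> (\<forall>c d. \<iota> (c + d) = \<iota> c + \<iota> d) \<and> (\<forall>c d. \<iota> (c * d) = \<iota> c * \<iota> d)"

definition is_module :: "('a::comm_ring_1 \<Rightarrow> 'v::ab_group_add \<Rightarrow> 'v) \<Rightarrow> bool" where
  "is_module sm \<longleftrightarrow>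
     (\<forall>a x y. sm a (x + y) = sm a x + sm a y) \<and>
     (\<forall>a b x. sm (a + b) x = sm a x + sm b x) \<and>
     (\<forall>a b x. sm (a * b) x = sm a (sm b x)) \<and>
     (\<forall>x. sm 1 x = x)"

text \<open>Restricted Lie algebra over K (char 2) on L, K-structure induced by iota.\<close>
definition restricted_Lie_algebra ::
  "('k::field \<Rightarrow> 'a::comm_ring_1) \<Rightarrow> ('a \<Rightarrow> 'l::ab_group_add \<Rightarrow> 'l) \<Rightarrow>
   ('l \<Rightarrow> 'l \<Rightarrow> 'l) \<Rightarrow> ('l \<Rightarrow> 'l) \<Rightarrow> bool" where
  "restricted_Lie_algebra \<iota> smL br sq \<longleftrightarrow>
     (\<forall>x y z. br (x + y) z = br x z + br y z) \<and>
     (\<forall>x y z. br x (y + z) = br x y + br x z) \<and>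
     (\<forall>c x y. br (smL (\<iota> c) x) y = smL (\<iota> c) (br x y)) \<and>
     (\<forall>c x y. br x (smL (\<iota> c) y) = smL (\<iota> c) (br x y)) \<and>
     (\<forall>x. br x x = 0) \<and>
     (\<forall>x y z. br x (br y z) + br y (br z x) + br z (br x y) = 0) \<and>
     (\<forall>c x. sq (smL (\<iota> c) x) = smL (\<iota> (c ^ 2)) (sq x)) \<and>
     (\<forall>x y. br (sq x) y = br x (br x y)) \<and>
     (\<forall>x y. sq (x + y) = sq x + sq y + br x y)"

definition is_derivation :: "('k::field \<Rightarrow> 'a::comm_ring_1) \<Rightarrow> ('a \<Rightarrow> 'a) \<Rightarrow> bool" where
  "is_derivation \<iota> D \<longleftrightarrow>
     (\<forall>a b. D (a + b) = D a + D b) \<and>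
     (\<forall>c a. D (\<iota> c * a) = \<iota> c * D a) \<and>
     (\<forall>a b. D (a * b) = a * D b + D a * b)"

definition restricted_LR_algebra ::
  "('k::field \<Rightarrow> 'a::comm_ring_1) \<Rightarrow> ('a \<Rightarrow> 'l::ab_group_add \<Rightarrow> 'l) \<Rightarrow>
   ('l \<Rightarrow> 'l \<Rightarrow> 'l) \<Rightarrow> ('l \<Rightarrow> 'l) \<Rightarrow> ('l \<Rightarrow> 'a \<Rightarrow> 'a) \<Rightarrow> bool" where
  "restricted_LR_algebra \<iota> smL br sq \<theta> \<longleftrightarrow>
     ring_hom_K \<iota> \<and> is_module smL \<and> restricted_Lie_algebra \<iota> smL br sq \<and>
     (\<forall>x. is_derivation \<iota> (\<theta> x)) \<and>
     (\<forall>x y. \<theta> (x + y) = (\<lambda>b. \<theta> x b + \<theta> y b)) \<and>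
     (\<forall>a x. \<theta> (smL a x) = (\<lambda>b. a * \<theta> x b)) \<and>
     (\<forall>x y. \<theta> (br x y) = (\<lambda>b. \<theta> x (\<theta> y b) - \<theta> y (\<theta> x b))) \<and>
     (\<forall>x. \<theta> (sq x) = (\<lambda>b. \<theta> x (\<theta> x b))) \<and>
     (\<forall>x a y. br x (smL a y) = smL a (br x y) + smL (\<theta> x a) y) \<and>
     (\<forall>a x. sq (smL a x) = smL (a ^ 2) (sq x) + smL (\<theta> (smL a x) a) x)"

definition restricted_LR_module ::
  "('k::field \<Rightarrow> 'a::comm_ring_1) \<Rightarrow> ('a \<Rightarrow> 'l::ab_group_add \<Rightarrow> 'l) \<Rightarrow>
   ('l \<Rightarrow> 'l \<Rightarrow> 'l) \<Rightarrow> ('l \<Rightarrow> 'l) \<Rightarrow> ('l \<Rightarrow> 'a \<Rightarrow> 'a) \<Rightarrow>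
   ('a \<Rightarrow> 'm::ab_group_add \<Rightarrow> 'm) \<Rightarrow> ('l \<Rightarrow> 'm \<Rightarrow> 'm) \<Rightarrow> bool" where
  "restricted_LR_module \<iota> smL br sq \<theta> smM \<rho> \<longleftrightarrow>
     is_module smM \<and>
     (\<forall>x m n. \<rho> x (m + n) = \<rho> x m + \<rho> x n) \<and>
     (\<forall>x c m. \<rho> x (smM (\<iota> c) m) = smM (\<iota> c) (\<rho> x m)) \<and>
     (\<forall>x y m. \<rho> (x + y) m = \<rho> x m + \<rho> y m) \<and>
     (\<forall>a x m. \<rho> (smL a x) m = smM a (\<rho> x m)) \<and>
     (\<forall>x y m. \<rho> (br x y) m = \<rho> x (\<rho> y m) - \<rho> y (\<rho> x m)) \<and>
     (\<forall>x m. \<rho> (sq x) m = \<rho> x (\<rho> x m)) \<and>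
     (\<forall>x a m. \<rho> x (smM a m) = smM a (\<rho> x m) + smM (\<theta> x a) m)"

definition del :: "nat \<Rightarrow> 'b list \<Rightarrow> 'b list" where
  "del i xs = take i xs @ drop (Suc i) xs"

definition alternating_on :: "nat \<Rightarrow> ('l list \<Rightarrow> 'm::zero) \<Rightarrow> bool" where
  "alternating_on n f \<longleftrightarrow>
     (\<forall>xs i j. length xs = n \<longrightarrow> i < j \<longrightarrow> j < n \<longrightarrow> xs ! i = xs ! j \<longrightarrow> f xs = 0)"

definition multilinear_on ::
  "'a set \<Rightarrow> ('a \<Rightarrow> 'l::ab_group_add \<Rightarrow> 'l) \<Rightarrow> ('a \<Rightarrow> 'm::ab_group_add \<Rightarrow> 'm) \<Rightarrow>
   nat \<Rightarrow> ('l list \<Rightarrow> 'm) \<Rightarrow> bool" where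
  "multilinear_on S smL smM n f \<longleftrightarrow>
     (\<forall>us vs x y. length us + length vs + 1 = n \<longrightarrow>
        f (us @ (x + y) # vs) = f (us @ x # vs) + f (us @ y # vs)) \<and>
     (\<forall>us vs x a. length us + length vs + 1 = n \<longrightarrow> a \<in> S \<longrightarrow>
        f (us @ smL a x # vs) = smM a (f (us @ x # vs)))"

definition LR_C1 :: "('a::comm_ring_1 \<Rightarrow> 'l::ab_group_add \<Rightarrow> 'l) \<Rightarrow> ('a \<Rightarrow> 'm::ab_group_add \<Rightarrow> 'm) \<Rightarrow>
   ('l \<Rightarrow> 'm) \<Rightarrow> bool" where
  "LR_C1 smL smM \<psi> \<longleftrightarrow> (\<forall>x y. \<psi> (x + y) = \<psi> x + \<psi> y) \<and> (\<forall>a x. \<psi> (smL a x) = smM a (\<psi> x))"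

text \<open>C^n for n \<ge> 2: pairs (phi, omega); omega x zs with length zs = n - 2.\<close>
definition LR_cochain ::
  "('k::field \<Rightarrow> 'a::comm_ring_1) \<Rightarrow> ('a \<Rightarrow> 'l::ab_group_add \<Rightarrow> 'l) \<Rightarrow> ('a \<Rightarrow> 'm::ab_group_add \<Rightarrow> 'm) \<Rightarrow>
   nat \<Rightarrow> ('l list \<Rightarrow> 'm) \<times> ('l \<Rightarrow> 'l list \<Rightarrow> 'm) \<Rightarrow> bool" where
  "LR_cochain \<iota> smL smM n c \<longleftrightarrow> (case c of (\<phi>, \<omega>) \<Rightarrow>
     alternating_on n \<phi> \<and> multilinear_on UNIV smL smM n \<phi> \<and>
     (\<forall>x. alternating_on (n - 2) (\<omega> x) \<and> multilinear_on (range \<iota>) smL smM (n - 2) (\<omega> x)) \<and>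
     (\<forall>c x zs. length zs = n - 2 \<longrightarrow> \<omega> (smL (\<iota> c) x) zs = smM (\<iota> (c ^ 2)) (\<omega> x zs)) \<and>
     (\<forall>x y zs. length zs = n - 2 \<longrightarrow> \<omega> (x + y) zs = \<omega> x zs + \<omega> y zs + \<phi> (x # y # zs)) \<and>
     (\<forall>a x zs. length zs = n - 2 \<longrightarrow> \<omega> (smL a x) zs = smM (a ^ 2) (\<omega> x zs)) \<and>
     (\<forall>a x us vs z. length us + length vs + 1 = n - 2 \<longrightarrow>
        \<omega> x (us @ smL a z # vs) = smM a (\<omega> x (us @ z # vs))))"

definition LR_zero :: "nat \<Rightarrow> ('l list \<Rightarrow> 'm::zero) \<times> ('l \<Rightarrow> 'l list \<Rightarrow> 'm) \<Rightarrow> bool" where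
  "LR_zero n c \<longleftrightarrow> (case c of (\<phi>, \<omega>) \<Rightarrow>
     (\<forall>xs. length xs = n \<longrightarrow> \<phi> xs = 0) \<and> (\<forall>x zs. length zs = n - 2 \<longrightarrow> \<omega> x zs = 0))"

definition dCE :: "('l \<Rightarrow> 'm \<Rightarrow> 'm::ab_group_add) \<Rightarrow> ('l \<Rightarrow> 'l \<Rightarrow> 'l) \<Rightarrow> ('l list \<Rightarrow> 'm) \<Rightarrow> 'l list \<Rightarrow> 'm" where
  "dCE \<rho> br \<phi> xs =
     (\<Sum>j<length xs. \<Sum>i<j. \<phi> (br (xs ! i) (xs ! j) # del i (del j xs))) +
     (\<Sum>i<length xs. \<rho> (xs ! i) (\<phi> (del i xs)))"

text \<open>delta^n omega (x, z_2, ..., z_n); zs = [z_2, ..., z_n].\<close>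
definition deltaLR :: "('l \<Rightarrow> 'm \<Rightarrow> 'm::ab_group_add) \<Rightarrow> ('l \<Rightarrow> 'l \<Rightarrow> 'l) \<Rightarrow> ('l \<Rightarrow> 'l) \<Rightarrow>
   ('l list \<Rightarrow> 'm) \<Rightarrow> ('l \<Rightarrow> 'l list \<Rightarrow> 'm) \<Rightarrow> 'l \<Rightarrow> 'l list \<Rightarrow> 'm" where
  "deltaLR \<rho> br sq \<phi> \<omega> x zs =
     \<rho> x (\<phi> (x # zs)) +
     (\<Sum>i<length zs. \<rho> (zs ! i) (\<omega> x (del i zs))) +
     \<phi> (sq x # zs) +
     (\<Sum>i<length zs. \<phi> (br x (zs ! i) # x # del i zs)) +
     (\<Sum>j<length zs. \<Sum>i<j. \<omega> x (br (zs ! i) (zs ! j) # del i (del j zs)))"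

definition d0 :: "('l \<Rightarrow> 'm \<Rightarrow> 'm) \<Rightarrow> 'm \<Rightarrow> 'l \<Rightarrow> 'm" where
  "d0 \<rho> m = (\<lambda>x. \<rho> x m)"

definition d1 :: "('l \<Rightarrow> 'm \<Rightarrow> 'm::ab_group_add) \<Rightarrow> ('l \<Rightarrow> 'l \<Rightarrow> 'l) \<Rightarrow> ('l \<Rightarrow> 'l) \<Rightarrow>
   ('l \<Rightarrow> 'm) \<Rightarrow> ('l list \<Rightarrow> 'm) \<times> ('l \<Rightarrow> 'l list \<Rightarrow> 'm)" where
  "d1 \<rho> br sq \<psi> = (dCE \<rho> br (\<lambda>xs. \<psi> (hd xs)), (\<lambda>x zs. \<psi> (sq x) + \<rho> x (\<psi> x)))"

text \<open>d^n for n \<ge> 2.\<close>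
definition dLR :: "('l \<Rightarrow> 'm \<Rightarrow> 'm::ab_group_add) \<Rightarrow> ('l \<Rightarrow> 'l \<Rightarrow> 'l) \<Rightarrow> ('l \<Rightarrow> 'l) \<Rightarrow>
   ('l list \<Rightarrow> 'm) \<times> ('l \<Rightarrow> 'l list \<Rightarrow> 'm) \<Rightarrow> ('l list \<Rightarrow> 'm) \<times> ('l \<Rightarrow> 'l list \<Rightarrow> 'm)" where
  "dLR \<rho> br sq c = (case c of (\<phi>, \<omega>) \<Rightarrow> (dCE \<rho> br \<phi>, deltaLR \<rho> br sq \<phi> \<omega>))"

end

theory Submission
  imports Defs "HOL-Library.Multiset"
begin

(* In characteristic 2 an alternating multilinear map is symmetric, so a cochain is a function of
   the multiset of its arguments.  For such functions let i_x insert the argument x and let L_x be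
   the Lie derivative.  The Chevalley-Eilenberg differential d is then determined by d F {#} = 0 and
   Cartan's formula i_x d + d i_x = L_x.  With [L_x, L_y] = L_[x,y] and L_x L_x = L_(x^[2]) an
   induction on the multiset gives L_x d = d L_x and d d = 0.  The restricted part of the
   differential is delta(omega)(x) = d(omega(x)) + L_x i_x phi + i_(x^[2]) phi, and with these
   identities all terms of delta(delta(omega))(x) cancel in pairs.  The cochain conditions for
   d(phi, omega) follow from the same calculus. *)

section \<open>Sums over the choices of one element of a multiset\<close>

definition pick_sum :: "('a \<Rightarrow> 'a multiset \<Rightarrow> 'b::comm_monoid_add) \<Rightarrow> 'a multiset \<Rightarrow> 'b" where
  "pick_sum F X = (\<Sum>y\<in>#X. F y (X - {#y#}))"

lemma pick_sum_empty [simp]: "pick_sum F {#} = 0"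
  by (simp add: pick_sum_def)

lemma pick_sum_add_mset:
  "pick_sum F (add_mset x X) = F x X + pick_sum (\<lambda>y Y. F y (add_mset x Y)) X"
proof -
  have "(\<Sum>y\<in>#X. F y (add_mset x X - {#y#})) = (\<Sum>y\<in>#X. F y (add_mset x (X - {#y#})))"
    by (intro arg_cong[where f = sum_mset] image_mset_cong) simp
  then show ?thesis by (simp add: pick_sum_def)
qed

lemma pick_sum_add: "pick_sum (\<lambda>y Y. F y Y + G y Y) X = pick_sum F X + pick_sum G X"
  by (simp add: pick_sum_def sum_mset.distrib)

lemma pick_sum_zero [simp]: "pick_sum (\<lambda>y Y. 0) X = 0"
  by (simp add: pick_sum_def)

lemma pick_sum_hom:
  assumes "\<And>a b. h (a + b) = h a + h b" and "h 0 = 0"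
  shows "h (pick_sum F X) = pick_sum (\<lambda>y Y. h (F y Y)) X"
  by (induction X arbitrary: F) (simp_all add: assms pick_sum_add_mset)

lemma pick_sum_pick_sum_sym_eq_0:
  fixes F :: "'a \<Rightarrow> 'a \<Rightarrow> 'a multiset \<Rightarrow> 'b::comm_monoid_add"
  assumes char2: "\<And>b::'b. b + b = 0" and sym: "\<And>y z Z. F y z Z = F z y Z"
  shows "pick_sum (\<lambda>y Y. pick_sum (\<lambda>z Z. F y z Z) Y) X = 0"
  using sym
proof (induction X arbitrary: F)
  case empty
  then show ?case by simp
next
  case (add x X)
  have "pick_sum (\<lambda>y Y. pick_sum (\<lambda>z Z. F y z (add_mset x Z)) Y) X = 0"
    by (rule add.IH) (use add.prems in simp)
  moreover have "pick_sum (\<lambda>y Y. F y x Y) X = pick_sum (F x) X"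
    by (intro arg_cong[where f = "\<lambda>G. pick_sum G X"] ext) (rule add.prems)
  ultimately show ?case
    by (simp add: pick_sum_add_mset pick_sum_add char2)
qed

section \<open>Functions of multisets\<close>

definition contract :: "'a \<Rightarrow> ('a multiset \<Rightarrow> 'b) \<Rightarrow> 'a multiset \<Rightarrow> 'b" where
  "contract x \<Psi> X = \<Psi> (add_mset x X)"

lemma contract_commute: "contract x (contract y \<Psi>) = contract y (contract x \<Psi>)"
  by (simp add: contract_def fun_eq_iff add_mset_commute)

lemma contract_add_fun: "contract x (\<lambda>X. \<Psi> X + \<Psi>' X) = (\<lambda>X. contract x \<Psi> X + contract x \<Psi>' X)"
  by (simp add: fun_eq_iff contract_def)

lemma contract_zero_fun [simp]: "contract x (\<lambda>X. 0) = (\<lambda>X. 0)"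
  by (simp add: fun_eq_iff contract_def)

definition slot_additive :: "('a::plus multiset \<Rightarrow> 'b::plus) \<Rightarrow> bool" where
  "slot_additive \<Psi> \<longleftrightarrow> (\<forall>u v X. \<Psi> (add_mset (u + v) X) = \<Psi> (add_mset u X) + \<Psi> (add_mset v X))"

definition slot_alternating :: "('a multiset \<Rightarrow> 'b::zero) \<Rightarrow> bool" where
  "slot_alternating \<Psi> \<longleftrightarrow> (\<forall>u X. \<Psi> (add_mset u (add_mset u X)) = 0)"

lemma slot_additive_contract: "slot_additive \<Psi> \<Longrightarrow> slot_additive (contract x \<Psi>)"
  by (simp add: slot_additive_def contract_def add_mset_commute[of x])

lemma contract_add_entry:
  "slot_additive \<Psi> \<Longrightarrow> contract (u + v) \<Psi> = (\<lambda>X. contract u \<Psi> X + contract v \<Psi> X)"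
  by (simp add: fun_eq_iff contract_def slot_additive_def)

lemma contract_contract_self: "slot_alternating \<Psi> \<Longrightarrow> contract u (contract u \<Psi>) = (\<lambda>X. 0)"
  by (simp add: fun_eq_iff contract_def slot_alternating_def)

lemma slot_additive_add:
  "slot_additive \<Psi> \<Longrightarrow> slot_additive \<Psi>' \<Longrightarrow> slot_additive (\<lambda>X. \<Psi> X + \<Psi>' X :: 'b::ab_semigroup_add)"
  by (simp add: slot_additive_def add_ac)

lemma slot_additive_zero_entry:
  fixes \<Psi> :: "'a::monoid_add multiset \<Rightarrow> 'b::ab_group_add"
  assumes "slot_additive \<Psi>"
  shows "\<Psi> (add_mset 0 X) = 0"
proof -
  have "\<Psi> (add_mset 0 X) = \<Psi> (add_mset 0 X) + \<Psi> (add_mset 0 X)"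
    using assms[unfolded slot_additive_def, rule_format, of 0 0 X] by simp
  then show ?thesis by simp
qed

lemma del_Cons_0 [simp]: "del 0 (x # xs) = xs"
  by (simp add: del_def)

lemma del_Cons_Suc [simp]: "del (Suc i) (x # xs) = x # del i xs"
  by (simp add: del_def)

lemma length_del [simp]: "i < length xs \<Longrightarrow> length (del i xs) = length xs - 1"
  by (simp add: del_def)

lemma pick_sum_mset: "(\<Sum>i<length xs. F (xs ! i) (mset (del i xs))) = pick_sum F (mset xs)"
proof (induction xs arbitrary: F)
  case Nil
  then show ?case by simp
next
  case (Cons x xs)
  have "(\<Sum>i<length xs. F (xs ! i) (add_mset x (mset (del i xs)))) =
      pick_sum (\<lambda>y Y. F y (add_mset x Y)) (mset xs)"
    by (rule Cons.IH)
  then show ?case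
    by (simp add: sum.lessThan_Suc_shift pick_sum_add_mset del: sum.lessThan_Suc)
qed

lemma swap_invariant_move_to_front:
  assumes "\<And>us x y vs. length us + length vs + 2 = n \<Longrightarrow> f (us @ x # y # vs) = f (us @ y # x # vs)"
    and "length (us @ x # vs) = n"
  shows "f (us @ x # vs) = f (x # us @ vs)"
  using assms
proof (induction us arbitrary: f n)
  case Nil
  then show ?case by simp
next
  case (Cons u us)
  have "f (u # us @ x # vs) = f (u # x # us @ vs)"
  proof (rule Cons.IH[of "n - 1" "\<lambda>l. f (u # l)"])
    show "f (u # us' @ x' # y' # vs') = f (u # us' @ y' # x' # vs')"
      if "length us' + length vs' + 2 = n - 1" for us' x' y' vs'
      using Cons.prems that Cons.prems(1)[of "u # us'"] by simp
  qed (use Cons.prems in simp)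
  also have "\<dots> = f (x # u # us @ vs)"
    using Cons.prems(1)[of "[]"] Cons.prems(2) by simp
  finally show ?case by simp
qed

lemma swap_invariant_eq_if_mset_eq:
  assumes "\<And>us x y vs. length us + length vs + 2 = n \<Longrightarrow> f (us @ x # y # vs) = f (us @ y # x # vs)"
    and "mset xs = mset ys" and "length xs = n"
  shows "f xs = f ys"
  using assms
proof (induction xs arbitrary: ys f n)
  case Nil
  then show ?case by simp
next
  case (Cons x xs)
  obtain us vs where ys: "ys = us @ x # vs"
    using Cons.prems(2) by (metis list.set_intros(1) set_mset_mset split_list)
  have "f (x # xs) = f (x # us @ vs)"
  proof (rule Cons.IH[of "n - 1" "\<lambda>l. f (x # l)"])
    show "f (x # us' @ x' # y' # vs') = f (x # us' @ y' # x' # vs')"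
      if "length us' + length vs' + 2 = n - 1" for us' x' y' vs'
      using Cons.prems that Cons.prems(1)[of "x # us'"] by simp
  qed (use Cons.prems ys in simp_all)
  also have "\<dots> = f ys"
    using swap_invariant_move_to_front[of n f us x vs] Cons.prems ys by (metis mset_eq_length)
  finally show ?case .
qed

lemma all_multiset_iff_all_list: "(\<forall>X. P X) \<longleftrightarrow> (\<forall>xs. P (mset xs))"
  using ex_mset by metis

lemma swap_invariant_some_mset:
  assumes "\<And>us x y vs. length us + length vs + 2 = n \<Longrightarrow> f (us @ x # y # vs) = f (us @ y # x # vs)"
    and "length xs = n"
  shows "f (SOME ys. mset ys = mset xs) = f xs"
proof -
  have "mset (SOME ys. mset ys = mset xs) = mset xs"
    by (rule someI) (rule refl)
  moreover from this have "length (SOME ys. mset ys = mset xs) = n"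
    using assms(2) by (metis mset_eq_length)
  ultimately show ?thesis
    using swap_invariant_eq_if_mset_eq[of n f, OF assms(1)] by blast
qed

lemma mset_split_two:
  assumes "i < j" and "j < length xs"
  obtains R where "mset xs = add_mset (xs ! i) (add_mset (xs ! j) R)"
proof -
  have "xs ! i \<in> set (take j xs)"
    using assms by (auto simp: in_set_conv_nth intro!: exI[of _ i])
  then obtain R where R: "mset (take j xs) = add_mset (xs ! i) R"
    by (metis in_multiset_in_set multi_member_split)
  have "mset xs = mset (take j xs @ xs ! j # drop (Suc j) xs)"
    by (simp only: id_take_nth_drop[OF assms(2), symmetric])
  then have "mset xs = add_mset (xs ! i) (add_mset (xs ! j) (R + mset (drop (Suc j) xs)))"
    by (simp add: R)
  then show ?thesis ..
qed

lemma alternating_on_if_mset: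
  fixes f :: "'a list \<Rightarrow> 'b::zero"
  assumes "\<And>xs. length xs = n \<Longrightarrow> f xs = \<Psi> (mset xs)" and "slot_alternating \<Psi>"
  shows "alternating_on n f"
  unfolding alternating_on_def
proof (intro allI impI)
  fix xs :: "'a list" and i j
  assume "length xs = n" "i < j" "j < n" "xs ! i = xs ! j"
  moreover obtain R where "mset xs = add_mset (xs ! i) (add_mset (xs ! j) R)"
    using mset_split_two \<open>i < j\<close> \<open>j < n\<close> \<open>length xs = n\<close> by blast
  ultimately show "f xs = 0"
    using assms by (simp add: slot_alternating_def)
qed

(* The value 0 off size n makes the slot conditions hold for multisets of every size. *)
definition mset_lift :: "nat \<Rightarrow> ('a list \<Rightarrow> 'b::zero) \<Rightarrow> 'a multiset \<Rightarrow> 'b" where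
  "mset_lift n f X = (if size X = n then f (SOME xs. mset xs = X) else 0)"

definition represents ::
  "nat \<Rightarrow> ('a list \<Rightarrow> 'b) \<times> ('a \<Rightarrow> 'a list \<Rightarrow> 'b) \<Rightarrow> ('a multiset \<Rightarrow> 'b) \<Rightarrow> ('a \<Rightarrow> 'a multiset \<Rightarrow> 'b) \<Rightarrow> bool"
  where "represents n c \<Phi> \<Omega> \<longleftrightarrow> (\<forall>xs. length xs = n \<longrightarrow> fst c xs = \<Phi> (mset xs)) \<and>
     (\<forall>x zs. length zs = n - 2 \<longrightarrow> snd c x zs = \<Omega> x (mset zs))"

lemma LR_zero_if_represents:
  "represents n c \<Phi> \<Omega> \<Longrightarrow> (\<And>X. \<Phi> X = 0) \<Longrightarrow> (\<And>x X. \<Omega> x X = 0) \<Longrightarrow> LR_zero n c"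
  unfolding represents_def LR_zero_def by (cases c) auto

lemma dCE_cong:
  assumes "\<And>ys. length ys = n \<Longrightarrow> \<phi> ys = \<phi>' ys" and "length xs = Suc n"
  shows "dCE \<rho> br \<phi> xs = dCE \<rho> br \<phi>' xs"
  unfolding dCE_def using assms
  by (intro arg_cong2[where f = "(+)"] sum.cong refl) auto

lemma deltaLR_cong:
  assumes "\<And>ys. length ys = n \<Longrightarrow> \<phi> ys = \<phi>' ys" and "\<And>y ys. length ys = n - 2 \<Longrightarrow> \<omega> y ys = \<omega>' y ys"
    and "length zs = n - 1" and "2 \<le> n"
  shows "deltaLR \<rho> br sq \<phi> \<omega> x zs = deltaLR \<rho> br sq \<phi>' \<omega>' x zs"
  unfolding deltaLR_def using assms
  by (intro arg_cong2[where f = "(+)"] sum.cong refl arg_cong[where f = "\<rho> _"]) auto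

section \<open>Restricted Lie--Rinehart modules in characteristic 2\<close>

locale restricted_LR_char2 =
  fixes \<iota> :: "'k::field \<Rightarrow> 'a::comm_ring_1"
    and smL :: "'a \<Rightarrow> 'l::ab_group_add \<Rightarrow> 'l"
    and br :: "'l \<Rightarrow> 'l \<Rightarrow> 'l" and sq :: "'l \<Rightarrow> 'l"
    and \<theta> :: "'l \<Rightarrow> 'a \<Rightarrow> 'a"
    and smM :: "'a \<Rightarrow> 'm::ab_group_add \<Rightarrow> 'm"
    and \<rho> :: "'l \<Rightarrow> 'm \<Rightarrow> 'm"
  assumes char: "CHAR('k) = 2"
    and alg: "restricted_LR_algebra \<iota> smL br sq \<theta>"
    and md: "restricted_LR_module \<iota> smL br sq \<theta> smM \<rho>"
begin

lemma iota_one: "\<iota> 1 = 1"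
  and iota_add: "\<iota> (c + d) = \<iota> c + \<iota> d"
  and iota_mult: "\<iota> (c * d) = \<iota> c * \<iota> d"
  using alg by (simp_all add: restricted_LR_algebra_def ring_hom_K_def)

lemma iota_zero: "\<iota> 0 = 0"
  using iota_add[of 0 0] by simp

lemma iota_power: "\<iota> (c ^ n) = \<iota> c ^ n"
  by (induction n) (simp_all add: iota_one iota_mult)

lemma add_self_A [simp]: "(a::'a) + a = 0"
proof -
  have "(1::'k) + 1 = 0"
    using of_nat_CHAR[where 'a = 'k] by (simp add: char)
  then have "(1::'a) + 1 = 0"
    using iota_add[of 1 1] by (simp add: iota_one iota_zero)
  then have "(1 + 1) * a = 0"
    by simp
  then show ?thesis
    by (simp add: distrib_right)
qed

lemma smL_add_left: "smL (a + b) x = smL a x + smL b x"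
  and smL_one [simp]: "smL 1 x = x"
  using alg by (simp_all add: restricted_LR_algebra_def is_module_def)

lemma smL_zero_left [simp]: "smL 0 x = 0"
  using smL_add_left[of 0 0 x] by simp

lemma smM_add_right [simp]: "smM a (m + n) = smM a m + smM a n"
  and smM_add_left: "smM (a + b) m = smM a m + smM b m"
  and smM_mult: "smM (a * b) m = smM a (smM b m)"
  and smM_one [simp]: "smM 1 m = m"
  using md by (simp_all add: restricted_LR_module_def is_module_def)

lemma smM_zero_left [simp]: "smM 0 m = 0"
  using smM_add_left[of 0 0 m] by simp

lemma smM_zero_right [simp]: "smM a 0 = 0"
  using smM_add_right[of a 0 0] by simp

lemma add_self_L [simp]: "(x::'l) + x = 0"
proof -
  have "x + x = smL (1 + 1) x" by (simp only: smL_add_left smL_one)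
  also have "\<dots> = 0" by (simp only: add_self_A smL_zero_left)
  finally show ?thesis .
qed

lemma add_self_M [simp]: "(m::'m) + m = 0"
proof -
  have "m + m = smM (1 + 1) m" by (simp only: smM_add_left smM_one)
  also have "\<dots> = 0" by (simp only: add_self_A smM_zero_left)
  finally show ?thesis .
qed

lemma minus_L [simp]: "- (x::'l) = x"
  by (rule minus_unique) simp

lemma minus_M [simp]: "- (m::'m) = m"
  by (rule minus_unique) simp

lemma diff_M [simp]: "(m::'m) - n = m + n"
  by (simp add: diff_conv_add_uminus)

lemma br_add_left [simp]: "br (x + y) z = br x z + br y z"
  and br_add_right [simp]: "br x (y + z) = br x y + br x z"
  and br_self [simp]: "br x x = 0"
  and jacobi: "br x (br y z) + br y (br z x) + br z (br x y) = 0"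
  and br_sq: "br (sq x) y = br x (br x y)"
  and sq_add: "sq (x + y) = sq x + sq y + br x y"
  using alg by (simp_all add: restricted_LR_algebra_def restricted_Lie_algebra_def)

lemma br_comm: "br x y = br y x"
proof -
  have "br (x + y) (x + y) = br x x + br y x + (br x y + br y y)"
    by (simp only: br_add_left br_add_right)
  then have "br y x + br x y = 0" by simp
  then have "- br y x = br x y" by (rule minus_unique)
  then show ?thesis by simp
qed

lemma br_br: "br (br x y) z = br x (br y z) + br y (br x z)"
proof -
  have "- (br x (br y z) + br y (br z x)) = br z (br x y)"
    using jacobi[of x y z] by (intro minus_unique) (simp add: add.assoc)
  then show ?thesis by (simp add: br_comm[of "br x y" z] br_comm[of z x])
qed

lemma br_smL_right: "br x (smL a y) = smL a (br x y) + smL (\<theta> x a) y"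
  and sq_smL: "sq (smL a x) = smL (a ^ 2) (sq x) + smL (\<theta> (smL a x) a) x"
  and theta_smL: "\<theta> (smL a x) b = a * \<theta> x b"
  and theta_mult: "\<theta> x (a * b) = a * \<theta> x b + \<theta> x a * b"
  using alg by (simp_all add: restricted_LR_algebra_def is_derivation_def)

lemma br_smL_left: "br (smL a y) x = smL a (br y x) + smL (\<theta> x a) y"
  using br_smL_right[of x a y] by (simp add: br_comm)

lemma theta_square [simp]: "\<theta> x (a ^ 2) = 0"
  by (simp add: power2_eq_square theta_mult mult.commute)

lemma rho_add_right [simp]: "\<rho> x (m + n) = \<rho> x m + \<rho> x n"
  and rho_add_left [simp]: "\<rho> (x + y) m = \<rho> x m + \<rho> y m"
  and rho_smL: "\<rho> (smL a x) m = smM a (\<rho> x m)"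
  and rho_br: "\<rho> (br x y) m = \<rho> x (\<rho> y m) + \<rho> y (\<rho> x m)"
  and rho_sq: "\<rho> (sq x) m = \<rho> x (\<rho> x m)"
  and rho_smM: "\<rho> x (smM a m) = smM a (\<rho> x m) + smM (\<theta> x a) m"
  using md by (simp_all add: restricted_LR_module_def)

lemma rho_zero_right [simp]: "\<rho> x 0 = 0"
  using rho_add_right[of x 0 0] by simp

lemma rho_pick_sum: "\<rho> x (pick_sum F X) = pick_sum (\<lambda>y Y. \<rho> x (F y Y)) X"
  by (rule pick_sum_hom) simp_all

lemma smM_pick_sum: "smM a (pick_sum F X) = pick_sum (\<lambda>y Y. smM a (F y Y)) X"
  by (rule pick_sum_hom) simp_all

section \<open>Cartan calculus\<close>

definition lie :: "'l \<Rightarrow> ('l multiset \<Rightarrow> 'm) \<Rightarrow> 'l multiset \<Rightarrow> 'm" where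
  "lie x \<Psi> X = \<rho> x (\<Psi> X) + pick_sum (\<lambda>y Y. \<Psi> (add_mset (br x y) Y)) X"

lemma lie_add_mset: "lie x \<Psi> (add_mset y X) = lie x (contract y \<Psi>) X + \<Psi> (add_mset (br x y) X)"
  by (simp add: lie_def contract_def pick_sum_add_mset add_mset_commute add_ac)

lemma contract_lie: "contract y (lie x \<Psi>) = (\<lambda>X. lie x (contract y \<Psi>) X + contract (br x y) \<Psi> X)"
  by (simp add: fun_eq_iff contract_def[of y] contract_def[of "br x y"] lie_add_mset)

lemma lie_add_fun: "lie x (\<lambda>X. \<Psi> X + \<Psi>' X) X = lie x \<Psi> X + lie x \<Psi>' X"
  by (simp add: lie_def pick_sum_add add_ac)

lemma lie_zero_fun [simp]: "lie x (\<lambda>X. 0) X = 0"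
  by (simp add: lie_def)

lemma lie_lie:
  "lie x (lie y \<Psi>) X = \<rho> x (\<rho> y (\<Psi> X)) +
     pick_sum (\<lambda>z Z. \<rho> x (\<Psi> (add_mset (br y z) Z)) + \<rho> y (\<Psi> (add_mset (br x z) Z)) +
       \<Psi> (add_mset (br y (br x z)) Z)) X +
     pick_sum (\<lambda>z Z. pick_sum (\<lambda>w W. \<Psi> (add_mset (br x z) (add_mset (br y w) W))) Z) X"
  by (simp add: lie_def pick_sum_add_mset pick_sum_add rho_pick_sum add_mset_commute add_ac)

lemma lie_lie_self: "lie x (lie x \<Psi>) X = lie (sq x) \<Psi> X"
proof -
  have "pick_sum (\<lambda>z Z. pick_sum (\<lambda>w W. \<Psi> (add_mset (br x z) (add_mset (br x w) W))) Z) X = 0"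
    by (rule pick_sum_pick_sum_sym_eq_0) (simp_all add: add_mset_commute)
  then show ?thesis
    unfolding lie_lie by (simp add: lie_def rho_sq br_sq)
qed

lemma lie_lie_commutator:
  assumes "slot_additive \<Psi>"
  shows "lie x (lie y \<Psi>) X + lie y (lie x \<Psi>) X = lie (br x y) \<Psi> X"
proof -
  define F where "F x y z Z = \<rho> x (\<Psi> (add_mset (br y z) Z)) + \<rho> y (\<Psi> (add_mset (br x z) Z)) +
    \<Psi> (add_mset (br y (br x z)) Z)" for x y z Z
  define P where
    "P x y = pick_sum (\<lambda>z Z. pick_sum (\<lambda>w W. \<Psi> (add_mset (br x z) (add_mset (br y w) W))) Z) X"
    for x y
  have expand: "lie x (lie y \<Psi>) X = \<rho> x (\<rho> y (\<Psi> X)) + pick_sum (F x y) X + P x y" for x y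
    unfolding F_def P_def by (rule lie_lie)
  have "P x y + P y x = 0"
    unfolding P_def pick_sum_add[symmetric]
    by (rule pick_sum_pick_sum_sym_eq_0) (simp_all add: add_mset_commute add.commute)
  moreover have
    "pick_sum (F x y) X + pick_sum (F y x) X = pick_sum (\<lambda>z Z. \<Psi> (add_mset (br (br x y) z) Z)) X"
    unfolding F_def pick_sum_add[symmetric] using assms by (simp add: slot_additive_def br_br add_ac)
  moreover have "lie x (lie y \<Psi>) X + lie y (lie x \<Psi>) X = (\<rho> x (\<rho> y (\<Psi> X)) + \<rho> y (\<rho> x (\<Psi> X))) +
      (pick_sum (F x y) X + pick_sum (F y x) X) + (P x y + P y x)"
    by (simp only: expand add_ac)
  ultimately show ?thesis
    by (simp add: lie_def rho_br)
qed

lemma dCE_Cons: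
  "dCE \<rho> br (\<lambda>ys. \<Phi> (mset ys)) (x # zs) = lie x \<Phi> (mset zs) + dCE \<rho> br (\<lambda>ys. contract x \<Phi> (mset ys)) zs"
proof -
  have "(\<Sum>j<length zs. \<Phi> (add_mset (br x (zs ! j)) (mset (del j zs)))) =
      pick_sum (\<lambda>y Y. \<Phi> (add_mset (br x y) Y)) (mset zs)"
    by (rule pick_sum_mset)
  then show ?thesis
    by (simp add: dCE_def lie_def contract_def sum.lessThan_Suc_shift sum.distrib add_mset_commute add_ac
        del: sum.lessThan_Suc)
qed

lemma dCE_swap:
  "dCE \<rho> br (\<lambda>ys. \<Phi> (mset ys)) (us @ x # y # vs) = dCE \<rho> br (\<lambda>ys. \<Phi> (mset ys)) (us @ y # x # vs)"
proof (induction us arbitrary: \<Phi>)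
  case Nil
  have "lie x \<Phi> (add_mset y V) + lie y (contract x \<Phi>) V = lie y \<Phi> (add_mset x V) + lie x (contract y \<Phi>) V"
    for V by (simp add: lie_add_mset br_comm[of x y] add_ac)
  then show ?case
    by (simp add: dCE_Cons contract_commute[of x y] add_ac)
next
  case (Cons u us)
  then show ?case
    by (simp add: dCE_Cons add_mset_commute)
qed

(* Independent of the choice of the list by dCE_swap. *)
definition dCE_mset :: "('l multiset \<Rightarrow> 'm) \<Rightarrow> 'l multiset \<Rightarrow> 'm" where
  "dCE_mset \<Phi> X = dCE \<rho> br (\<lambda>ys. \<Phi> (mset ys)) (SOME xs. mset xs = X)"

lemma dCE_mset_mset: "dCE_mset \<Phi> (mset xs) = dCE \<rho> br (\<lambda>ys. \<Phi> (mset ys)) xs"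
  unfolding dCE_mset_def
  by (rule swap_invariant_some_mset[where n = "length xs"]) (simp_all add: dCE_swap)

lemma dCE_mset_empty [simp]: "dCE_mset \<Phi> {#} = 0"
  using dCE_mset_mset[of \<Phi> "[]"] by (simp add: dCE_def)

(* Cartan's formula; together with dCE_mset_empty it determines dCE_mset. *)
lemma dCE_mset_add_mset: "dCE_mset \<Phi> (add_mset x X) = lie x \<Phi> X + dCE_mset (contract x \<Phi>) X"
proof -
  obtain xs where X: "mset xs = X"
    using ex_mset by blast
  have "dCE_mset \<Phi> (mset (x # xs)) = lie x \<Phi> (mset xs) + dCE_mset (contract x \<Phi>) (mset xs)"
    by (simp only: dCE_mset_mset dCE_Cons)
  then show ?thesis
    by (simp add: X[symmetric])
qed

lemma dCE_mset_add_fun: "dCE_mset (\<lambda>X. \<Psi> X + \<Psi>' X) X = dCE_mset \<Psi> X + dCE_mset \<Psi>' X"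
  by (induction X arbitrary: \<Psi> \<Psi>') (simp_all add: dCE_mset_add_mset lie_add_fun contract_add_fun add_ac)

lemma dCE_mset_zero_fun [simp]: "dCE_mset (\<lambda>X. 0) X = 0"
  by (induction X) (simp_all add: dCE_mset_add_mset)

lemma contract_dCE_mset: "contract x (dCE_mset \<Psi>) = (\<lambda>X. lie x \<Psi> X + dCE_mset (contract x \<Psi>) X)"
  by (simp add: fun_eq_iff contract_def[of x "dCE_mset \<Psi>"] dCE_mset_add_mset)

lemma lie_dCE_mset:
  assumes "slot_additive \<Psi>"
  shows "lie x (dCE_mset \<Psi>) X = dCE_mset (lie x \<Psi>) X"
  using assms
proof (induction X arbitrary: \<Psi>)
  case empty
  then show ?case by (simp add: lie_def)
next
  case (add y X)
  have "lie x (lie y \<Psi>) X + lie (br x y) \<Psi> X = lie y (lie x \<Psi>) X"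
    using lie_lie_commutator[OF add.prems, of x y X, symmetric] by simp
  moreover have "lie x (dCE_mset (contract y \<Psi>)) X = dCE_mset (lie x (contract y \<Psi>)) X"
    using add.IH add.prems slot_additive_contract by blast
  ultimately show ?case
    by (simp add: lie_add_mset contract_dCE_mset lie_add_fun dCE_mset_add_mset contract_lie
        dCE_mset_add_fun add_ac)
qed

lemma dCE_mset_dCE_mset:
  assumes "slot_additive \<Psi>"
  shows "dCE_mset (dCE_mset \<Psi>) X = 0"
  using assms
proof (induction X arbitrary: \<Psi>)
  case empty
  then show ?case by simp
next
  case (add x X)
  have "dCE_mset (dCE_mset (contract x \<Psi>)) X = 0"
    using add slot_additive_contract by blast
  then show ?case
    using add.prems by (simp add: dCE_mset_add_mset contract_dCE_mset dCE_mset_add_fun lie_dCE_mset)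
qed

(* The paper's delta^n: d(omega x) collects the terms containing omega, the remaining ones are
   L_x i_x phi + i_(x^[2]) phi. *)
definition delta_mset :: "('l multiset \<Rightarrow> 'm) \<Rightarrow> ('l \<Rightarrow> 'l multiset \<Rightarrow> 'm) \<Rightarrow> 'l \<Rightarrow> 'l multiset \<Rightarrow> 'm" where
  "delta_mset \<Phi> \<Omega> x X = dCE_mset (\<Omega> x) X + lie x (contract x \<Phi>) X + contract (sq x) \<Phi> X"

lemma delta_mset_eq:
  "delta_mset \<Phi> \<Omega> x = (\<lambda>X. dCE_mset (\<Omega> x) X + lie x (contract x \<Phi>) X + contract (sq x) \<Phi> X)"
  by (simp add: fun_eq_iff delta_mset_def)

lemma delta_mset_delta_mset:
  assumes "slot_additive \<Phi>" and "slot_additive (\<Omega> x)"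
  shows "delta_mset (dCE_mset \<Phi>) (delta_mset \<Phi> \<Omega>) x X = 0"
proof -
  have "delta_mset (dCE_mset \<Phi>) (delta_mset \<Phi> \<Omega>) x X =
      dCE_mset (dCE_mset (\<Omega> x)) X +
      (dCE_mset (lie x (contract x \<Phi>)) X + lie x (dCE_mset (contract x \<Phi>)) X) +
      (lie x (lie x \<Phi>) X + lie (sq x) \<Phi> X)"
    by (simp add: delta_mset_eq contract_dCE_mset lie_add_fun dCE_mset_add_fun add_ac)
  also have "\<dots> = 0"
    using assms by (simp add: dCE_mset_dCE_mset lie_dCE_mset slot_additive_contract lie_lie_self)
  finally show ?thesis .
qed

section \<open>The cochain conditions\<close>

definition slot_homogeneous :: "('l multiset \<Rightarrow> 'm) \<Rightarrow> bool" where
  "slot_homogeneous \<Psi> \<longleftrightarrow> (\<forall>a u X. \<Psi> (add_mset (smL a u) X) = smM a (\<Psi> (add_mset u X)))"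

definition mset_cochain :: "('l multiset \<Rightarrow> 'm) \<Rightarrow> bool" where
  "mset_cochain \<Psi> \<longleftrightarrow> slot_additive \<Psi> \<and> slot_homogeneous \<Psi> \<and> slot_alternating \<Psi>"

definition mset_cochain_pair :: "('l multiset \<Rightarrow> 'm) \<Rightarrow> ('l \<Rightarrow> 'l multiset \<Rightarrow> 'm) \<Rightarrow> bool" where
  "mset_cochain_pair \<Phi> \<Omega> \<longleftrightarrow> mset_cochain \<Phi> \<and> (\<forall>x. mset_cochain (\<Omega> x)) \<and>
     (\<forall>a x X. \<Omega> (smL a x) X = smM (a ^ 2) (\<Omega> x X)) \<and>
     (\<forall>x y X. \<Omega> (x + y) X = \<Omega> x X + \<Omega> y X + \<Phi> (add_mset x (add_mset y X)))"

lemma contract_smM_fun: "contract x (\<lambda>X. smM a (\<Psi> X)) = (\<lambda>X. smM a (contract x \<Psi> X))"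
  by (simp add: fun_eq_iff contract_def)

lemma contract_smL_entry:
  "slot_homogeneous \<Psi> \<Longrightarrow> contract (smL a u) \<Psi> = (\<lambda>X. smM a (contract u \<Psi> X))"
  by (simp add: fun_eq_iff contract_def slot_homogeneous_def)

lemma lie_smM: "lie x (\<lambda>X. smM a (\<Psi> X)) X = smM a (lie x \<Psi> X) + smM (\<theta> x a) (\<Psi> X)"
  by (simp add: lie_def rho_smM smM_pick_sum add_ac)

lemma lie_add_left: "slot_additive \<Psi> \<Longrightarrow> lie (x + y) \<Psi> X = lie x \<Psi> X + lie y \<Psi> X"
  by (simp add: lie_def slot_additive_def pick_sum_add add_ac)

lemma lie_smL:
  assumes "slot_additive \<Psi>" and "slot_homogeneous \<Psi>"
  shows "lie (smL a x) \<Psi> X = smM a (lie x \<Psi> X) + pick_sum (\<lambda>y Y. smM (\<theta> y a) (contract x \<Psi> Y)) X"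
  using assms
  by (simp add: lie_def slot_additive_def slot_homogeneous_def br_smL_left rho_smL smM_pick_sum
      pick_sum_add contract_def add_ac)

lemma mset_cochain_add:
  "mset_cochain \<Psi> \<Longrightarrow> mset_cochain \<Psi>' \<Longrightarrow> mset_cochain (\<lambda>X. \<Psi> X + \<Psi>' X)"
  by (simp add: mset_cochain_def slot_additive_def slot_homogeneous_def slot_alternating_def add_ac)

lemma mset_cochain_contract: "mset_cochain \<Psi> \<Longrightarrow> mset_cochain (contract x \<Psi>)"
  by (simp add: mset_cochain_def slot_additive_contract slot_homogeneous_def slot_alternating_def
      contract_def add_mset_commute[of x])

lemma mset_cochain_lie:
  assumes "mset_cochain \<Psi>"
  shows "mset_cochain (lie x \<Psi>)"
proof -
  have add: "slot_additive \<Psi>" and hom: "slot_homogeneous \<Psi>" and alt: "slot_alternating \<Psi>"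
    using assms by (simp_all add: mset_cochain_def)
  have "slot_additive (lie x \<Psi>)"
    using add by (simp add: slot_additive_def lie_add_mset contract_add_entry lie_add_fun add_ac)
  moreover have "lie x \<Psi> (add_mset (smL a u) X) = smM a (lie x \<Psi> (add_mset u X))" for a u X
  proof -
    have "lie x \<Psi> (add_mset (smL a u) X) =
        lie x (\<lambda>X. smM a (contract u \<Psi> X)) X + \<Psi> (add_mset (smL a (br x u) + smL (\<theta> x a) u) X)"
      using hom by (simp add: lie_add_mset contract_smL_entry br_smL_right)
    also have "\<dots> = smM a (lie x (contract u \<Psi>) X) + smM (\<theta> x a) (contract u \<Psi> X) +
        (smM a (\<Psi> (add_mset (br x u) X)) + smM (\<theta> x a) (\<Psi> (add_mset u X)))"
      using add hom by (simp add: lie_smM slot_additive_def slot_homogeneous_def)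
    also have "\<dots> = smM a (lie x \<Psi> (add_mset u X))"
      by (simp add: lie_add_mset contract_def[of u \<Psi> X] add_ac)
    finally show ?thesis .
  qed
  moreover have "lie x \<Psi> (add_mset u (add_mset u X)) = 0" for u X
  proof -
    have "lie x \<Psi> (add_mset u (add_mset u X)) =
        lie x (contract u (contract u \<Psi>)) X + contract u \<Psi> (add_mset (br x u) X) +
        \<Psi> (add_mset (br x u) (add_mset u X))"
      by (simp add: lie_add_mset)
    also have "\<dots> = 0"
      using alt by (simp add: contract_contract_self contract_def[of u \<Psi>] add_mset_commute)
    finally show ?thesis .
  qed
  ultimately show ?thesis
    by (simp add: mset_cochain_def slot_homogeneous_def slot_alternating_def)
qed

lemma dCE_mset_smM:
  "dCE_mset (\<lambda>X. smM a (\<Psi> X)) X = smM a (dCE_mset \<Psi> X) + pick_sum (\<lambda>y Y. smM (\<theta> y a) (\<Psi> Y)) X"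
proof (induction X arbitrary: \<Psi>)
  case empty
  then show ?case by simp
next
  case (add x X)
  have "pick_sum (\<lambda>y Y. smM (\<theta> y a) (contract x \<Psi> Y)) X =
      pick_sum (\<lambda>y Y. smM (\<theta> y a) (\<Psi> (add_mset x Y))) X"
    by (simp only: contract_def)
  then show ?case
    using add.IH[of "contract x \<Psi>"]
    by (simp add: dCE_mset_add_mset lie_smM contract_smM_fun pick_sum_add_mset add_ac)
qed

lemma mset_cochain_dCE_mset:
  assumes "mset_cochain \<Psi>"
  shows "mset_cochain (dCE_mset \<Psi>)"
proof -
  have add: "slot_additive \<Psi>" and hom: "slot_homogeneous \<Psi>" and alt: "slot_alternating \<Psi>"
    using assms by (simp_all add: mset_cochain_def)
  have "slot_additive (dCE_mset \<Psi>)"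
    using add by (simp add: slot_additive_def dCE_mset_add_mset lie_add_left contract_add_entry
        dCE_mset_add_fun add_ac)
  moreover have "slot_homogeneous (dCE_mset \<Psi>)"
    \<comment> \<open>the theta-terms of lie_smL and dCE_mset_smM cancel\<close>
    using add hom
    by (simp add: slot_homogeneous_def dCE_mset_add_mset lie_smL contract_smL_entry dCE_mset_smM)
  moreover have "slot_alternating (dCE_mset \<Psi>)"
    using add alt
    by (simp add: slot_alternating_def dCE_mset_add_mset lie_add_mset contract_contract_self
        slot_additive_zero_entry)
  ultimately show ?thesis
    by (simp add: mset_cochain_def)
qed

lemma mset_cochain_delta_mset: "mset_cochain_pair \<Phi> \<Omega> \<Longrightarrow> mset_cochain (delta_mset \<Phi> \<Omega> x)"
  by (simp add: mset_cochain_pair_def delta_mset_eq mset_cochain_add mset_cochain_dCE_mset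
      mset_cochain_lie mset_cochain_contract)

lemma delta_mset_smL:
  assumes "mset_cochain_pair \<Phi> \<Omega>"
  shows "delta_mset \<Phi> \<Omega> (smL a x) X = smM (a ^ 2) (delta_mset \<Phi> \<Omega> x X)"
proof -
  have add: "slot_additive \<Phi>" and hom: "slot_homogeneous \<Phi>" and alt: "slot_alternating \<Phi>"
    and \<Omega>_smL: "\<Omega> (smL a x) = (\<lambda>X. smM (a ^ 2) (\<Omega> x X))"
    using assms by (simp_all add: mset_cochain_pair_def mset_cochain_def fun_eq_iff)
  have contract_ax: "contract (smL a x) \<Phi> = (\<lambda>X. smM a (contract x \<Phi> X))"
    using hom by (rule contract_smL_entry)
  have "dCE_mset (\<Omega> (smL a x)) X = smM (a ^ 2) (dCE_mset (\<Omega> x) X)"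
    by (simp add: \<Omega>_smL dCE_mset_smM)
  moreover have "lie (smL a x) (contract (smL a x) \<Phi>) X =
      smM (a ^ 2) (lie x (contract x \<Phi>) X) + smM (a * \<theta> x a) (contract x \<Phi> X)"
  proof -
    have "slot_additive (contract (smL a x) \<Phi>)" "slot_homogeneous (contract (smL a x) \<Phi>)"
      using add hom by (simp_all add: slot_additive_contract slot_homogeneous_def contract_def
          add_mset_commute[of "smL a x"])
    then have "lie (smL a x) (contract (smL a x) \<Phi>) X =
        smM a (lie x (contract (smL a x) \<Phi>) X) +
        pick_sum (\<lambda>y Y. smM (\<theta> y a) (contract x (contract (smL a x) \<Phi>) Y)) X"
      by (rule lie_smL)
    moreover have "contract x (contract (smL a x) \<Phi>) = (\<lambda>X. 0)"
      using alt by (simp add: contract_ax contract_smM_fun contract_contract_self)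
    ultimately show ?thesis
      by (simp add: contract_ax lie_smM power2_eq_square smM_mult)
  qed
  moreover have "contract (sq (smL a x)) \<Phi> X =
      smM (a ^ 2) (contract (sq x) \<Phi> X) + smM (a * \<theta> x a) (contract x \<Phi> X)"
    using add hom by (simp add: contract_def sq_smL theta_smL slot_additive_def slot_homogeneous_def)
  ultimately show ?thesis
    by (simp add: delta_mset_def add_ac)
qed

lemma delta_mset_add:
  assumes "mset_cochain_pair \<Phi> \<Omega>"
  shows "delta_mset \<Phi> \<Omega> (x + y) X =
    delta_mset \<Phi> \<Omega> x X + delta_mset \<Phi> \<Omega> y X + dCE_mset \<Phi> (add_mset x (add_mset y X))"
proof -
  have add: "slot_additive \<Phi>"
    and \<Omega>_add: "\<Omega> (x + y) = (\<lambda>X. \<Omega> x X + \<Omega> y X + contract x (contract y \<Phi>) X)"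
    using assms by (simp_all add: mset_cochain_pair_def mset_cochain_def fun_eq_iff contract_def
        add_mset_commute)
  have "lie (x + y) (contract (x + y) \<Phi>) X =
      lie x (contract x \<Phi>) X + lie x (contract y \<Phi>) X + lie y (contract x \<Phi>) X + lie y (contract y \<Phi>) X"
    using add by (simp add: contract_add_entry lie_add_left slot_additive_add slot_additive_contract
        lie_add_fun add_ac)
  moreover have "contract (sq (x + y)) \<Phi> X =
      contract (sq x) \<Phi> X + contract (sq y) \<Phi> X + contract (br x y) \<Phi> X"
    using add by (simp add: sq_add contract_add_entry)
  moreover have "dCE_mset \<Phi> (add_mset x (add_mset y X)) =
      lie x (contract y \<Phi>) X + contract (br x y) \<Phi> X + lie y (contract x \<Phi>) X +
      dCE_mset (contract x (contract y \<Phi>)) X"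
    by (simp add: dCE_mset_add_mset lie_add_mset contract_def[of "br x y"] contract_commute[of y x])
  ultimately show ?thesis
    by (simp add: delta_mset_def \<Omega>_add dCE_mset_add_fun add_ac)
qed

lemma mset_cochain_pair_dCE_delta:
  assumes "mset_cochain_pair \<Phi> \<Omega>"
  shows "mset_cochain_pair (dCE_mset \<Phi>) (delta_mset \<Phi> \<Omega>)"
  using assms mset_cochain_dCE_mset[of \<Phi>] mset_cochain_delta_mset[OF assms] delta_mset_smL[OF assms]
    delta_mset_add[OF assms]
  by (simp add: mset_cochain_pair_def)

section \<open>Cochains on lists as functions of multisets\<close>

lemma deltaLR_mset:
  "deltaLR \<rho> br sq (\<lambda>ys. \<Phi> (mset ys)) (\<lambda>y ys. \<Omega> y (mset ys)) x zs = delta_mset \<Phi> \<Omega> x (mset zs)"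
proof -
  have "(\<Sum>i<length zs. \<Phi> (add_mset (br x (zs ! i)) (add_mset x (mset (del i zs))))) =
      pick_sum (\<lambda>y Y. \<Phi> (add_mset (br x y) (add_mset x Y))) (mset zs)"
    by (rule pick_sum_mset)
  then show ?thesis
    by (simp add: deltaLR_def delta_mset_def dCE_mset_mset dCE_def lie_def contract_def add_mset_commute
        add_ac)
qed

lemma represents_dLR:
  assumes "represents n c \<Phi> \<Omega>" and "2 \<le> n"
  shows "represents (n + 1) (dLR \<rho> br sq c) (dCE_mset \<Phi>) (delta_mset \<Phi> \<Omega>)"
proof -
  obtain \<phi> \<omega> where c: "c = (\<phi>, \<omega>)"
    by fastforce
  have \<phi>: "\<phi> ys = \<Phi> (mset ys)" if "length ys = n" for ys
    using assms(1) that by (simp add: represents_def c)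
  have \<omega>: "\<omega> y ys = \<Omega> y (mset ys)" if "length ys = n - 2" for y ys
    using assms(1) that by (simp add: represents_def c)
  have "dCE \<rho> br \<phi> xs = dCE_mset \<Phi> (mset xs)" if "length xs = n + 1" for xs
    unfolding dCE_mset_mset by (rule dCE_cong[of n]) (use that \<phi> in simp_all)
  moreover have "deltaLR \<rho> br sq \<phi> \<omega> x zs = delta_mset \<Phi> \<Omega> x (mset zs)" if "length zs = n - 1" for x zs
    unfolding deltaLR_mset[symmetric] by (rule deltaLR_cong[of n]) (use that assms(2) \<phi> \<omega> in simp_all)
  ultimately show ?thesis
    by (simp add: represents_def dLR_def c)
qed

lemma alternating_swap:
  assumes "alternating_on n f" and "multilinear_on S smL smM n f"
    and "length us + length vs + 2 = n"
  shows "f (us @ x # y # vs) = f (us @ y # x # vs)"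
proof -
  have zero: "f (us @ z # z # vs) = 0" for z
    using assms(1)[unfolded alternating_on_def, rule_format, of "us @ z # z # vs" "length us"
        "Suc (length us)"] assms(3)
    by (simp add: nth_append)
  have lin: "f (us' @ (a + b) # vs') = f (us' @ a # vs') + f (us' @ b # vs')"
    if "length us' + length vs' + 1 = n" for us' vs' a b
    using assms(2) that unfolding multilinear_on_def by blast
  have "0 = f (us @ (x + y) # (x + y) # vs)"
    by (rule zero[symmetric])
  also have "\<dots> = f (us @ x # y # vs) + f (us @ y # x # vs)"
    using assms(3) lin[of us "(x + y) # vs"] lin[of "us @ [x]" vs] lin[of "us @ [y]" vs]
    by (simp add: zero[of x] zero[of y])
  finally show ?thesis
    by (simp add: eq_neg_iff_add_eq_0[symmetric])
qed

lemma mset_lift_mset: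
  assumes "alternating_on n f" and "multilinear_on S smL smM n f" and "length xs = n"
  shows "mset_lift n f (mset xs) = f xs"
  using assms(3) swap_invariant_some_mset[of n f, OF alternating_swap[OF assms(1,2)]]
  by (simp add: mset_lift_def)

lemma mset_lift_add_mset:
  assumes "alternating_on n f" and "multilinear_on S smL smM n f"
  shows "mset_lift n f (add_mset u (mset zs)) = (if Suc (length zs) = n then f (u # zs) else 0)"
  using mset_lift_mset[OF assms, of "u # zs"] by (simp add: mset_lift_def)

lemma mset_cochain_mset_lift:
  assumes alt: "alternating_on n f" and ml: "multilinear_on UNIV smL smM n f"
  shows "mset_cochain (mset_lift n f)"
proof -
  note lift = mset_lift_add_mset[OF alt ml]
  have ml_add: "f (us @ (x + y) # vs) = f (us @ x # vs) + f (us @ y # vs)"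
    and ml_hom: "f (us @ smL a x # vs) = smM a (f (us @ x # vs))"
    if "length us + length vs + 1 = n" for us vs x y a
    using ml that unfolding multilinear_on_def by blast+
  have "f (u # u # zs) = 0" if "Suc (Suc (length zs)) = n" for u zs
    using alt[unfolded alternating_on_def, rule_format, of "u # u # zs" 0 1] that by simp
  then have "mset_lift n f (add_mset (u + v) (mset zs)) =
        mset_lift n f (add_mset u (mset zs)) + mset_lift n f (add_mset v (mset zs))"
      "mset_lift n f (add_mset (smL a u) (mset zs)) = smM a (mset_lift n f (add_mset u (mset zs)))"
      "mset_lift n f (add_mset u (add_mset u (mset zs))) = 0" for u v a zs
    using lift[of u "u # zs"] ml_add[of "[]" zs] ml_hom[of "[]" zs] by (simp_all add: lift)
  then show ?thesis
    unfolding mset_cochain_def slot_additive_def slot_homogeneous_def slot_alternating_def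
    by (simp add: all_multiset_iff_all_list)
qed

lemma multilinear_on_if_mset:
  assumes "\<And>xs. length xs = n \<Longrightarrow> f xs = \<Psi> (mset xs)" and "slot_additive \<Psi>" and "slot_homogeneous \<Psi>"
  shows "multilinear_on S smL smM n f"
  using assms by (simp add: multilinear_on_def slot_additive_def slot_homogeneous_def)

lemma LR_cochain_if_represents:
  assumes "represents n c \<Phi> \<Omega>" and "2 \<le> n" and "mset_cochain_pair \<Phi> \<Omega>"
  shows "LR_cochain \<iota> smL smM n c"
proof -
  obtain \<phi> \<omega> where c: "c = (\<phi>, \<omega>)"
    by fastforce
  have \<phi>: "\<phi> xs = \<Phi> (mset xs)" if "length xs = n" for xs
    using assms(1) that by (simp add: represents_def c)
  have \<omega>: "\<omega> y zs = \<Omega> y (mset zs)" if "length zs = n - 2" for y zs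
    using assms(1) that by (simp add: represents_def c)
  have \<Phi>: "mset_cochain \<Phi>" and \<Omega>: "mset_cochain (\<Omega> y)" for y
    using assms(3) by (simp_all add: mset_cochain_pair_def)
  have \<phi>_\<omega>: "\<phi> (x # y # zs) = \<Phi> (add_mset x (add_mset y (mset zs)))" if "length zs = n - 2" for x y zs
    using \<phi>[of "x # y # zs"] that assms(2) by simp
  show ?thesis
    unfolding LR_cochain_def c prod.case
    using assms(3) \<Phi> \<Omega> \<phi> \<omega> \<phi>_\<omega>
    by (simp add: mset_cochain_pair_def mset_cochain_def alternating_on_if_mset multilinear_on_if_mset
        slot_homogeneous_def iota_power)
qed

lemma LR_cochain_alternating_multilinear:
  assumes "LR_cochain \<iota> smL smM n (\<phi>, \<omega>)"
  shows "alternating_on n \<phi>" and "multilinear_on UNIV smL smM n \<phi>"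
    and "alternating_on (n - 2) (\<omega> x)" and "multilinear_on UNIV smL smM (n - 2) (\<omega> x)"
  using assms unfolding LR_cochain_def multilinear_on_def by auto

lemma represents_mset_lift:
  assumes "LR_cochain \<iota> smL smM n (\<phi>, \<omega>)"
  shows "represents n (\<phi>, \<omega>) (mset_lift n \<phi>) (\<lambda>x. mset_lift (n - 2) (\<omega> x))"
  using mset_lift_mset[OF LR_cochain_alternating_multilinear(1,2)[OF assms]]
    mset_lift_mset[OF LR_cochain_alternating_multilinear(3,4)[OF assms]]
  by (simp add: represents_def)

lemma mset_cochain_pair_mset_lift:
  assumes "2 \<le> n" and "LR_cochain \<iota> smL smM n (\<phi>, \<omega>)"
  shows "mset_cochain_pair (mset_lift n \<phi>) (\<lambda>x. mset_lift (n - 2) (\<omega> x))"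
proof -
  note C = assms(2)[unfolded LR_cochain_def prod.case]
  note lift = mset_lift_mset[OF LR_cochain_alternating_multilinear(1,2)[OF assms(2)]]
    mset_lift_mset[OF LR_cochain_alternating_multilinear(3,4)[OF assms(2)]]
  have "mset_lift (n - 2) (\<omega> (smL a x)) (mset zs) = smM (a ^ 2) (mset_lift (n - 2) (\<omega> x) (mset zs))"
    for a x zs
  proof (cases "length zs = n - 2")
    case True
    then show ?thesis
      using C by (simp add: lift)
  next
    case False
    then show ?thesis
      by (simp add: mset_lift_def)
  qed
  moreover have "mset_lift (n - 2) (\<omega> (x + y)) (mset zs) = mset_lift (n - 2) (\<omega> x) (mset zs) +
      mset_lift (n - 2) (\<omega> y) (mset zs) + mset_lift n \<phi> (add_mset x (add_mset y (mset zs)))" for x y zs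
  proof (cases "length zs = n - 2")
    case True
    then show ?thesis
      using C lift(1)[of "x # y # zs"] assms(1) by (simp add: lift)
  next
    case False
    then have "Suc (Suc (length zs)) \<noteq> n"
      using assms(1) by linarith
    with False show ?thesis
      by (simp add: mset_lift_def)
  qed
  moreover have "mset_cochain (mset_lift n \<phi>)" "mset_cochain (mset_lift (n - 2) (\<omega> x))" for x
    by (rule mset_cochain_mset_lift[OF LR_cochain_alternating_multilinear(1,2)[OF assms(2)]],
        rule mset_cochain_mset_lift[OF LR_cochain_alternating_multilinear(3,4)[OF assms(2)]])
  ultimately show ?thesis
    by (simp add: mset_cochain_pair_def all_multiset_iff_all_list)
qed

lemma represents_d1:
  assumes "LR_C1 smL smM \<psi>"
  obtains \<Phi> \<Omega> where "represents 2 (d1 \<rho> br sq \<psi>) (dCE_mset \<Phi>) (delta_mset \<Phi> \<Omega>)"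
    and "mset_cochain_pair \<Phi> \<Omega>"
proof -
  have alt: "alternating_on 1 (\<lambda>xs. \<psi> (hd xs))"
    by (simp add: alternating_on_def)
  have ml: "multilinear_on UNIV smL smM 1 (\<lambda>xs. \<psi> (hd xs))"
    using assms by (simp add: multilinear_on_def LR_C1_def)
  define \<Phi> where "\<Phi> = mset_lift 1 (\<lambda>xs. \<psi> (hd xs))"
  have \<Phi>_mset: "\<Phi> (mset xs) = \<psi> (hd xs)" if "length xs = 1" for xs
    unfolding \<Phi>_def using alt ml that by (rule mset_lift_mset)
  have "mset_cochain \<Phi>"
    unfolding \<Phi>_def using alt ml by (rule mset_cochain_mset_lift)
  moreover have "mset_cochain (\<lambda>X. 0)"
    by (simp add: mset_cochain_def slot_additive_def slot_homogeneous_def slot_alternating_def)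
  moreover have "\<Phi> (add_mset x (add_mset y X)) = 0" for x y X
    by (simp add: \<Phi>_def mset_lift_def)
  ultimately have "mset_cochain_pair \<Phi> (\<lambda>x X. 0)"
    by (simp add: mset_cochain_pair_def)
  moreover have "dCE \<rho> br (\<lambda>xs. \<psi> (hd xs)) xs = dCE_mset \<Phi> (mset xs)" if "length xs = 2" for xs
    unfolding dCE_mset_mset by (rule dCE_cong[of 1]) (use that \<Phi>_mset in simp_all)
  moreover have "\<psi> (sq x) + \<rho> x (\<psi> x) = delta_mset \<Phi> (\<lambda>x X. 0) x {#}" for x
    using \<Phi>_mset[of "[x]"] \<Phi>_mset[of "[sq x]"] by (simp add: delta_mset_def lie_def contract_def)
  ultimately show ?thesis
    by (intro that[of \<Phi> "\<lambda>x X. 0"]) (simp_all add: represents_def d1_def)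
qed

lemma LR_cochain_and_dLR_zero_if_represents_d:
  assumes "represents n c (dCE_mset \<Phi>) (delta_mset \<Phi> \<Omega>)" and "2 \<le> n" and "mset_cochain_pair \<Phi> \<Omega>"
  shows "LR_cochain \<iota> smL smM n c \<and> LR_zero (n + 1) (dLR \<rho> br sq c)"
proof
  show "LR_cochain \<iota> smL smM n c"
    using assms mset_cochain_pair_dCE_delta by (blast intro: LR_cochain_if_represents)
  have "represents (n + 1) (dLR \<rho> br sq c)
      (dCE_mset (dCE_mset \<Phi>)) (delta_mset (dCE_mset \<Phi>) (delta_mset \<Phi> \<Omega>))"
    using assms(1,2) by (rule represents_dLR)
  then show "LR_zero (n + 1) (dLR \<rho> br sq c)"
    by (rule LR_zero_if_represents)
      (use assms(3) in \<open>simp_all add: mset_cochain_pair_def mset_cochain_def dCE_mset_dCE_mset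
        delta_mset_delta_mset\<close>)
qed

lemma d0_cochain_and_d1_d0_zero: "LR_C1 smL smM (d0 \<rho> m) \<and> LR_zero 2 (d1 \<rho> br sq (d0 \<rho> m))"
proof
  show "LR_C1 smL smM (d0 \<rho> m)"
    by (simp add: LR_C1_def d0_def rho_smL)
  have "dCE \<rho> br (\<lambda>xs. \<rho> (hd xs) m) [u, v] = 0" for u v
    by (simp add: dCE_def del_def numeral_2_eq_2 lessThan_Suc rho_br add_ac)
  moreover have "\<exists>u v. xs = [u, v]" if "length xs = 2" for xs :: "'l list"
    using that by (auto simp: numeral_2_eq_2 length_Suc_conv)
  ultimately have "dCE \<rho> br (\<lambda>xs. \<rho> (hd xs) m) xs = 0" if "length xs = 2" for xs
    using that by blast
  then show "LR_zero 2 (d1 \<rho> br sq (d0 \<rho> m))"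
    by (simp add: LR_zero_def d1_def d0_def rho_sq)
qed

lemma d1_cochain_and_dLR_d1_zero:
  assumes "LR_C1 smL smM \<psi>"
  shows "LR_cochain \<iota> smL smM 2 (d1 \<rho> br sq \<psi>) \<and> LR_zero 3 (dLR \<rho> br sq (d1 \<rho> br sq \<psi>))"
proof -
  obtain \<Phi> \<Omega> where "represents 2 (d1 \<rho> br sq \<psi>) (dCE_mset \<Phi>) (delta_mset \<Phi> \<Omega>)"
    and "mset_cochain_pair \<Phi> \<Omega>"
    using assms by (rule represents_d1)
  then show ?thesis
    using LR_cochain_and_dLR_zero_if_represents_d[of 2] by simp
qed

lemma dLR_cochain_and_dLR_dLR_zero:
  assumes "2 \<le> n" and "LR_cochain \<iota> smL smM n c"
  shows "LR_cochain \<iota> smL smM (n + 1) (dLR \<rho> br sq c) \<and> LR_zero (n + 2) (dLR \<rho> br sq (dLR \<rho> br sq c))"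
proof -
  obtain \<phi> \<omega> where c: "c = (\<phi>, \<omega>)"
    by fastforce
  have "represents (n + 1) (dLR \<rho> br sq c) (dCE_mset (mset_lift n \<phi>))
      (delta_mset (mset_lift n \<phi>) (\<lambda>x. mset_lift (n - 2) (\<omega> x)))"
    using represents_mset_lift assms unfolding c by (blast intro: represents_dLR)
  then show ?thesis
    using LR_cochain_and_dLR_zero_if_represents_d[of "n + 1"] mset_cochain_pair_mset_lift assms
    unfolding c by simp
qed

end

theorem mainTheorem5:
  fixes \<iota> :: "'k::field \<Rightarrow> 'a::comm_ring_1"
    and smL :: "'a \<Rightarrow> 'l::ab_group_add \<Rightarrow> 'l"
    and br :: "'l \<Rightarrow> 'l \<Rightarrow> 'l" and sq :: "'l \<Rightarrow> 'l"
    and \<theta> :: "'l \<Rightarrow> 'a \<Rightarrow> 'a"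
    and smM :: "'a \<Rightarrow> 'm::ab_group_add \<Rightarrow> 'm"
    and \<rho> :: "'l \<Rightarrow> 'm \<Rightarrow> 'm"
  assumes "CHAR('k) = 2"
    and "restricted_LR_algebra \<iota> smL br sq \<theta>"
    and "restricted_LR_module \<iota> smL br sq \<theta> smM \<rho>"
  shows
    "(\<forall>m. LR_C1 smL smM (d0 \<rho> m) \<and> LR_zero 2 (d1 \<rho> br sq (d0 \<rho> m)))
     \<and> (\<forall>\<psi>. LR_C1 smL smM \<psi> \<longrightarrow>
          LR_cochain \<iota> smL smM 2 (d1 \<rho> br sq \<psi>) \<and>
          LR_zero 3 (dLR \<rho> br sq (d1 \<rho> br sq \<psi>)))
     \<and> (\<forall>n c. 2 \<le> n \<longrightarrow> LR_cochain \<iota> smL smM n c \<longrightarrow>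
          LR_cochain \<iota> smL smM (n + 1) (dLR \<rho> br sq c) \<and>
          LR_zero (n + 2) (dLR \<rho> br sq (dLR \<rho> br sq c)))"
proof -
  interpret restricted_LR_char2 \<iota> smL br sq \<theta> smM \<rho>
    using assms by unfold_locales
  show ?thesis
    using d0_cochain_and_d1_d0_zero d1_cochain_and_dLR_d1_zero dLR_cochain_and_dLR_dLR_zero by blast
qed

end
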